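(* Let $G$ be a connected graph and $I\subseteq V(G)$. (1) If $I$ is a pre-cycle core of $G$, then $\pi_1(G|_I;x,y)=\pi_1(G;x,y)$ for all $x,y\in I$. (2) Conversely, if $x\in I$ and $\pi_1(G|_I;x)=\pi_1(G;x)$, then the connected component of $G|_I$ containing $x$ contains all cycles of $G$.
   Context: Graphs are simple and unoriented, possibly infinite. A cycle in $G$ is a closed path $(x_0,\dots,x_n=x_0)$ with no repeated vertices except $x_0=x_n$ and no edges $(x_i,x_j)$ of $G$ with $i-j\not\equiv0,\pm1\pmod n$. A pre-cycle core of $G$ is a subset $I\subseteq V(G)$ such that $G|_I$ is connected and contains all cycles of $G$. The fundamental groupoid of $G$ has, for vertices $x,y$, the set $\pi_1(G;x,y)$ of homotopy classes of paths from $x$ to $y$ (equivalently, the set of non-backtracking paths from $x$ to $y$, each class having a unique non-backtracking representative); $\pi_1(G;x)=\pi_1(G;x,x)$. For a subgraph $H$, $\pi_1(H;x,y)$ is regarded naturally as a subset of $\pi_1(G;x,y)$. *)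

theory Defs
  imports Main
begin

definition sgraph :: "'a set \<Rightarrow> ('a \<Rightarrow> 'a \<Rightarrow> bool) \<Rightarrow> bool" where
  "sgraph V E \<longleftrightarrow> (\<forall>x y. E x y \<longrightarrow> E y x \<and> x \<noteq> y \<and> x \<in> V \<and> y \<in> V)"

definition induced :: "('a \<Rightarrow> 'a \<Rightarrow> bool) \<Rightarrow> 'a set \<Rightarrow> 'a \<Rightarrow> 'a \<Rightarrow> bool" where
  "induced E I x y \<longleftrightarrow> E x y \<and> x \<in> I \<and> y \<in> I"

definition walk :: "'a set \<Rightarrow> ('a \<Rightarrow> 'a \<Rightarrow> bool) \<Rightarrow> 'a list \<Rightarrow> bool" where
  "walk V E xs \<longleftrightarrow> xs \<noteq> [] \<and> set xs \<subseteq> V \<and>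
     (\<forall>i. Suc i < length xs \<longrightarrow> E (xs ! i) (xs ! Suc i))"

definition non_backtracking :: "'a list \<Rightarrow> bool" where
  "non_backtracking xs \<longleftrightarrow> (\<forall>i. Suc (Suc i) < length xs \<longrightarrow> xs ! i \<noteq> xs ! Suc (Suc i))"

text \<open>pi_1(G;x,y), represented by the unique non-backtracking representatives.\<close>
definition pi1 :: "'a set \<Rightarrow> ('a \<Rightarrow> 'a \<Rightarrow> bool) \<Rightarrow> 'a \<Rightarrow> 'a \<Rightarrow> 'a list set" where
  "pi1 V E x y = {xs. walk V E xs \<and> hd xs = x \<and> last xs = y \<and> non_backtracking xs}"

definition connected_graph :: "'a set \<Rightarrow> ('a \<Rightarrow> 'a \<Rightarrow> bool) \<Rightarrow> bool" where
  "connected_graph V E \<longleftrightarrow> (\<forall>x\<in>V. \<forall>y\<in>V. \<exists>xs. walk V E xs \<and> hd xs = x \<and> last xs = y)"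

definition component :: "'a set \<Rightarrow> ('a \<Rightarrow> 'a \<Rightarrow> bool) \<Rightarrow> 'a \<Rightarrow> 'a set" where
  "component V E x = {y. \<exists>xs. walk V E xs \<and> hd xs = x \<and> last xs = y}"

text \<open>A cycle (x_0,...,x_n = x_0), stored as the list [x_0,...,x_{n-1}]: n \<ge> 3 distinct
vertices, consecutive ones adjacent (cyclically), and no other edges among them
(edges (x_i,x_j) only if i - j = \<plusminus>1 mod n).\<close>
definition is_cycle :: "'a set \<Rightarrow> ('a \<Rightarrow> 'a \<Rightarrow> bool) \<Rightarrow> 'a list \<Rightarrow> bool" where
  "is_cycle V E xs \<longleftrightarrow> length xs \<ge> 3 \<and> distinct xs \<and> set xs \<subseteq> V \<and>
     (\<forall>i < length xs. E (xs ! i) (xs ! ((i + 1) mod length xs))) \<and>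
     (\<forall>i < length xs. \<forall>j < length xs. E (xs ! i) (xs ! j) \<longrightarrow>
        (int i - int j) mod int (length xs) \<in> {1, int (length xs) - 1})"

definition pre_cycle_core :: "'a set \<Rightarrow> ('a \<Rightarrow> 'a \<Rightarrow> bool) \<Rightarrow> 'a set \<Rightarrow> bool" where
  "pre_cycle_core V E I \<longleftrightarrow> I \<subseteq> V \<and> connected_graph I (induced E I) \<and>
     (\<forall>c. is_cycle V E c \<longrightarrow> set c \<subseteq> I)"

end

theory Submission
  imports Defs
begin

text \<open>
(1) A non-backtracking walk between vertices of I that leaves I contains an excursion
u, m_1, ..., m_k, v with u, v in I and all m_i outside I. Closing it up by a path from v back
to u inside G|_I yields a simple cycle through some m_i: either the excursion itself repeats
a vertex, and a non-backtracking walk with a repetition contains a simple cycle, or the closed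
walk is one. Splitting a simple cycle along its chords leaves an induced cycle through m_i,
which is therefore not contained in I.

(2) Given a cycle c, go from x along a path that meets c only at its end, once around c, and
back. This closed walk is non-backtracking, so by hypothesis it lies in G|_I, and all of its
vertices, in particular those of c, are in the component of x.
\<close>

lemma walk_iff_successively:
  "walk V E xs \<longleftrightarrow> xs \<noteq> [] \<and> set xs \<subseteq> V \<and> successively E xs"
  unfolding walk_def successively_conv_nth by blast

lemma successively_append_Cons:
  "successively R (xs @ [u]) \<Longrightarrow> successively R (u # ys) \<Longrightarrow> successively R (xs @ u # ys)"
  by (cases xs rule: rev_cases) (auto simp: successively_append_iff successively_Cons)

lemma sgraph_successively_rev:
  assumes "sgraph V E" "successively E xs"
  shows "successively E (rev xs)"
proof -
  have "E x y" if "E y x" for x y using assms(1) that unfolding sgraph_def by blast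
  then show ?thesis using assms(2) unfolding successively_rev by (blast intro: successively_mono)
qed

lemma sgraph_successively_subset:
  assumes "sgraph V E" "successively E xs" "2 \<le> length xs"
  shows "set xs \<subseteq> V"
  using assms(2,3)
proof (induction xs rule: induct_list012)
  case (3 a b xs)
  have "a \<in> V" "b \<in> V" using assms(1) \<open>successively E (a # b # xs)\<close> unfolding sgraph_def by auto
  then show ?case using 3 by (cases xs) auto
qed auto

lemma successively_shortcut_distinct:
  assumes "successively R xs" "xs \<noteq> []"
  shows "\<exists>ys. successively R ys \<and> distinct ys \<and> ys \<noteq> [] \<and> hd ys = hd xs \<and> last ys = last xs \<and>
    set ys \<subseteq> set xs"
  using assms
proof (induction "length xs" arbitrary: xs rule: less_induct)
  case less
  show ?case
  proof (cases "distinct xs")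
    case False
    then obtain as y bs cs where xs: "xs = as @ [y] @ bs @ [y] @ cs"
      using not_distinct_decomp by blast
    let ?ys = "as @ [y] @ cs"
    have "successively R ?ys"
      using less.prems(1) unfolding xs by (auto simp: successively_append_iff successively_Cons)
    moreover have "hd ?ys = hd xs" "last ?ys = last xs" "set ?ys \<subseteq> set xs"
      unfolding xs by (cases as; auto)+
    moreover have "length ?ys < length xs" unfolding xs by simp
    ultimately show ?thesis using less.hyps[of ?ys] by fastforce
  qed (use less.prems in blast)
qed

lemma connected_graph_distinct_walk:
  assumes "connected_graph V E" "x \<in> V" "y \<in> V"
  shows "\<exists>p. walk V E p \<and> distinct p \<and> hd p = x \<and> last p = y"
proof -
  obtain p0 where "walk V E p0" "hd p0 = x" "last p0 = y"
    using assms unfolding connected_graph_def by blast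
  then show ?thesis
    using successively_shortcut_distinct[of E p0] unfolding walk_iff_successively by fastforce
qed

lemma walk_induced_iff:
  assumes "I \<subseteq> V"
  shows "walk I (induced E I) w \<longleftrightarrow> walk V E w \<and> set w \<subseteq> I"
proof -
  have "successively (induced E I) w \<longleftrightarrow> successively E w" if "set w \<subseteq> I"
    using that by (intro successively_cong) (auto simp: induced_def)
  then show ?thesis using assms unfolding walk_iff_successively by blast
qed

lemma pi1_induced:
  "I \<subseteq> V \<Longrightarrow> pi1 I (induced E I) x y = {w \<in> pi1 V E x y. set w \<subseteq> I}"
  unfolding pi1_def by (auto simp: walk_induced_iff)

lemma walk_subset_component:
  assumes "walk V E w"
  shows "set w \<subseteq> component V E (hd w)"
proof
  fix v assume "v \<in> set w"
  then obtain ys zs where w: "w = ys @ v # zs" by (meson split_list)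
  have "walk V E (ys @ [v])"
    using assms unfolding w walk_iff_successively by (auto simp: successively_append_iff)
  moreover have "hd (ys @ [v]) = hd w" unfolding w by (cases ys) auto
  ultimately show "v \<in> component V E (hd w)" unfolding component_def by force
qed

lemma non_backtracking_Nil [simp]: "non_backtracking []"
  and non_backtracking_singleton [simp]: "non_backtracking [a]"
  and non_backtracking_doubleton [simp]: "non_backtracking [a, b]"
  by (simp_all add: non_backtracking_def)

lemma non_backtracking_Cons_Cons_Cons [simp]:
  "non_backtracking (a # b # c # xs) \<longleftrightarrow> a \<noteq> c \<and> non_backtracking (b # c # xs)"
  (is "non_backtracking ?l \<longleftrightarrow> _")
proof
  assume nb: "non_backtracking ?l"
  have "a \<noteq> c" using nb[unfolded non_backtracking_def, rule_format, of 0] by simp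
  moreover have "non_backtracking (b # c # xs)"
    unfolding non_backtracking_def
  proof (intro allI impI)
    fix i assume "Suc (Suc i) < length (b # c # xs)"
    then show "(b # c # xs) ! i \<noteq> (b # c # xs) ! Suc (Suc i)"
      using nb[unfolded non_backtracking_def, rule_format, of "Suc i"] by simp
  qed
  ultimately show "a \<noteq> c \<and> non_backtracking (b # c # xs)" ..
next
  assume "a \<noteq> c \<and> non_backtracking (b # c # xs)"
  then show "non_backtracking ?l"
    unfolding non_backtracking_def
    by (auto simp: nth_Cons split: nat.split)
qed

lemma non_backtracking_append_Cons:
  "non_backtracking (xs @ u # ys) \<longleftrightarrow>
     non_backtracking (xs @ [u]) \<and> non_backtracking (u # ys) \<and>
     (xs \<noteq> [] \<longrightarrow> ys \<noteq> [] \<longrightarrow> last xs \<noteq> hd ys)"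
proof (induction xs rule: induct_list012)
  case (2 a)
  then show ?case by (cases ys) auto
next
  case (3 a b xs)
  then show ?case by (cases xs) auto
qed simp

lemma non_backtracking_appendD:
  assumes "non_backtracking (xs @ ys)"
  shows "non_backtracking xs" and "non_backtracking ys"
proof -
  note nb = assms[unfolded non_backtracking_def, rule_format]
  show "non_backtracking xs"
    unfolding non_backtracking_def
  proof (intro allI impI)
    fix i assume "Suc (Suc i) < length xs"
    then show "xs ! i \<noteq> xs ! Suc (Suc i)" using nb[of i] by (simp add: nth_append)
  qed
  show "non_backtracking ys"
    unfolding non_backtracking_def
  proof (intro allI impI)
    fix i assume "Suc (Suc i) < length ys"
    then show "ys ! i \<noteq> ys ! Suc (Suc i)" using nb[of "length xs + i"] by (simp add: nth_append)
  qed
qed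

lemma distinct_imp_non_backtracking: "distinct xs \<Longrightarrow> non_backtracking xs"
  unfolding non_backtracking_def by (simp add: nth_eq_iff_index_eq)

(* Cycles as in is_cycle, but chords are allowed. *)
definition simple_cycle :: "('a \<Rightarrow> 'a \<Rightarrow> bool) \<Rightarrow> 'a list \<Rightarrow> bool" where
  "simple_cycle E c \<longleftrightarrow> 3 \<le> length c \<and> distinct c \<and> successively E (c @ [hd c])"

lemma nth_append_hd_Suc:
  assumes "i < length c"
  shows "(c @ [hd c]) ! Suc i = c ! (Suc i mod length c)"
proof (cases "Suc i < length c")
  case False
  then have "Suc i = length c" "c \<noteq> []" using assms by auto
  then show ?thesis by (simp add: hd_conv_nth)
qed (simp add: nth_append)

lemma simple_cycle_iff_nth:
  "simple_cycle E c \<longleftrightarrow>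
     3 \<le> length c \<and> distinct c \<and> (\<forall>i < length c. E (c ! i) (c ! (Suc i mod length c)))"
proof -
  have "successively E (c @ [hd c]) \<longleftrightarrow> (\<forall>i < length c. E (c ! i) (c ! (Suc i mod length c)))"
    unfolding successively_conv_nth by (simp add: nth_append_hd_Suc nth_append_left)
  then show ?thesis unfolding simple_cycle_def by blast
qed

lemma is_cycle_imp_simple_cycle: "is_cycle V E c \<Longrightarrow> simple_cycle E c"
  unfolding is_cycle_def simple_cycle_iff_nth by simp

lemma simple_cycle_subset:
  "sgraph V E \<Longrightarrow> simple_cycle E c \<Longrightarrow> set c \<subseteq> V"
  unfolding simple_cycle_def using sgraph_successively_subset[of V E "c @ [hd c]"] by auto

lemma simple_cycle_append_swap:
  "simple_cycle E (xs @ ys) \<Longrightarrow> simple_cycle E (ys @ xs)"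
  unfolding simple_cycle_def
  by (cases "xs = []"; cases "ys = []")
    (auto simp: successively_append_iff successively_Cons)

lemma simple_cycle_split_at_chord:
  assumes "simple_cycle E (a # xs @ b # ys)" "E a b" "E b a" "xs \<noteq> []" "ys \<noteq> []"
  shows "simple_cycle E (a # xs @ [b])" and "simple_cycle E (b # ys @ [a])"
  using assms unfolding simple_cycle_def
  by (auto simp: successively_append_iff successively_Cons Suc_le_eq)

lemma simple_cycle_closed_non_backtracking:
  assumes "simple_cycle E c"
  shows "non_backtracking (c @ [hd c])"
  unfolding non_backtracking_def
proof (intro allI impI)
  fix i assume "Suc (Suc i) < length (c @ [hd c])"
  then have i: "Suc i < length c" by simp
  have n: "3 \<le> length c" and d: "distinct c" using assms unfolding simple_cycle_def by auto
  have "i \<noteq> Suc (Suc i) mod length c"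
  proof (cases "Suc (Suc i) < length c")
    case False
    then have "Suc (Suc i) = length c" using i by simp
    then show ?thesis using n by simp
  qed simp
  moreover have "Suc (Suc i) mod length c < length c"
    using i by (intro mod_less_divisor) linarith
  ultimately have "c ! i \<noteq> c ! (Suc (Suc i) mod length c)"
    using i d by (simp add: nth_eq_iff_index_eq)
  then show "(c @ [hd c]) ! i \<noteq> (c @ [hd c]) ! Suc (Suc i)"
    using i by (simp add: nth_append_hd_Suc nth_append_left)
qed

lemma int_diff_mod:
  fixes i j n :: nat
  shows "i < j \<Longrightarrow> j < n \<Longrightarrow> (int i - int j) mod int n = int n - int (j - i)"
    and "j < i \<Longrightarrow> i < n \<Longrightarrow> (int i - int j) mod int n = int (i - j)"
proof -
  assume "i < j" "j < n"
  have "(int i - int j) mod int n = (int i - int j + int n) mod int n" by simp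
  also have "int i - int j + int n = int n - int (j - i)" using \<open>i < j\<close> by simp
  also have "(int n - int (j - i)) mod int n = int n - int (j - i)"
    using \<open>i < j\<close> \<open>j < n\<close> by (intro mod_pos_pos_trivial) auto
  finally show "(int i - int j) mod int n = int n - int (j - i)" .
next
  assume "j < i" "i < n"
  then show "(int i - int j) mod int n = int (i - j)"
    by (simp add: of_nat_diff mod_pos_pos_trivial)
qed

lemma id_take_nth_take_nth_drop:
  assumes "i < j" "j < length c"
  shows "c = take i c @ c ! i # take (j - Suc i) (drop (Suc i) c) @ c ! j # drop (Suc j) c"
proof -
  have "drop (Suc i) c = take (j - Suc i) (drop (Suc i) c) @ c ! j # drop (Suc j) c"
    using assms id_take_nth_drop[of "j - Suc i" "drop (Suc i) c"] by simp
  then show ?thesis using id_take_nth_drop[of i c] assms by simp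
qed

lemma simple_cycle_chord_if_not_is_cycle:
  assumes g: "sgraph V E" and c: "simple_cycle E c" "set c \<subseteq> V" and "\<not> is_cycle V E c"
  shows "\<exists>ps a xs b ys. c = ps @ a # xs @ b # ys \<and> E a b \<and> xs \<noteq> [] \<and> ys @ ps \<noteq> []"
proof -
  let ?n = "length c"
  obtain i j where ij: "i < ?n" "j < ?n" "E (c ! i) (c ! j)"
    and far: "(int i - int j) mod int ?n \<notin> {1, int ?n - 1}"
    using assms unfolding is_cycle_def simple_cycle_iff_nth by auto
  have sym: "E (c ! j) (c ! i)" and "i \<noteq> j" using g ij(3) unfolding sgraph_def by auto
  define l h where "l = min i j" and "h = max i j"
  have lh: "l < h" "h < ?n" "E (c ! l) (c ! h)"
    using ij sym \<open>i \<noteq> j\<close> unfolding l_def h_def by (auto simp: min_def max_def)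
  have "h - l \<noteq> 1 \<and> h - l \<noteq> ?n - 1"
  proof (cases "i < j")
    case True
    then show ?thesis using far ij int_diff_mod(1)[of i j ?n] unfolding l_def h_def by auto
  next
    case False
    then show ?thesis using far ij \<open>i \<noteq> j\<close> int_diff_mod(2)[of j i ?n] unfolding l_def h_def
      by auto
  qed
  then have gap: "2 \<le> h - l" "h - l + 2 \<le> ?n" using lh by auto
  have "Suc h < length c \<or> 0 < l" using lh gap by linarith
  then have "take (h - Suc l) (drop (Suc l) c) \<noteq> []" "drop (Suc h) c @ take l c \<noteq> []"
    using lh gap by auto
  with lh(3) id_take_nth_take_nth_drop[OF lh(1,2)] show ?thesis by fast
qed

lemma simple_cycle_induced_cycle_through:
  assumes g: "sgraph V E"
  shows "simple_cycle E c \<Longrightarrow> v \<in> set c \<Longrightarrow> \<exists>c'. is_cycle V E c' \<and> v \<in> set c' \<and> set c' \<subseteq> set c"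
proof (induction "length c" arbitrary: c rule: less_induct)
  case less
  have cV: "set c \<subseteq> V" using simple_cycle_subset[OF g less.prems(1)] .
  show ?case
  proof (cases "is_cycle V E c")
    case False
    then obtain ps a xs b ys where c: "c = ps @ a # xs @ b # ys"
      and ab: "E a b" and ne: "xs \<noteq> []" "ys @ ps \<noteq> []"
      using simple_cycle_chord_if_not_is_cycle[OF g less.prems(1) cV] by blast
    define c1 c2 where "c1 = a # xs @ [b]" and "c2 = b # (ys @ ps) @ [a]"
    have rotated: "simple_cycle E (a # xs @ b # (ys @ ps))"
      using simple_cycle_append_swap[of E ps "a # xs @ b # ys"] less.prems(1) c by simp
    have ba: "E b a" using g ab unfolding sgraph_def by blast
    have "simple_cycle E c1" "simple_cycle E c2"
      unfolding c1_def c2_def by (fact simple_cycle_split_at_chord[OF rotated ab ba ne])+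
    moreover have "length c1 < length c" "length c2 < length c"
      using ne unfolding c c1_def c2_def by auto
    moreover have "set c = set c1 \<union> set c2" unfolding c c1_def c2_def by auto
    ultimately show ?thesis
      using less.hyps[of c1] less.hyps[of c2] less.prems(2) by blast
  qed (use less.prems in blast)
qed

lemma non_backtracking_not_distinct_simple_cycle:
  assumes g: "sgraph V E"
  shows "successively E w \<Longrightarrow> non_backtracking w \<Longrightarrow> \<not> distinct w \<Longrightarrow>
    \<exists>c. simple_cycle E c \<and> set c \<subseteq> set w"
proof (induction "length w" arbitrary: w rule: less_induct)
  case less
  obtain as y bs cs where "w = as @ [y] @ bs @ [y] @ cs"
    using not_distinct_decomp less.prems(3) by blast
  then have w: "w = as @ ((y # bs) @ [y]) @ cs" by simp
  have loop: "successively E ((y # bs) @ [y])" "non_backtracking ((y # bs) @ [y])"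
    using less.prems(1,2) non_backtracking_appendD unfolding w
    by (auto simp only: successively_append_iff)
  show ?case
  proof (cases "distinct (y # bs)")
    case True
    have "\<not> E y y" using g unfolding sgraph_def by blast
    then have "bs \<noteq> []"
      using loop(1) by auto
    moreover have "bs \<noteq> [b]" for b
      using loop(2) by auto
    ultimately have "3 \<le> length (y # bs)"
      by (cases bs rule: remdups_adj.cases) auto
    then have "simple_cycle E (y # bs)"
      using True loop(1) unfolding simple_cycle_def by simp
    then show ?thesis unfolding w by auto
  next
    case False
    have "length (y # bs) < length w" unfolding w by simp
    then obtain c where "simple_cycle E c" "set c \<subseteq> set (y # bs)"
      using less.hyps False loop successively_append_iff non_backtracking_appendD by metis
    then show ?thesis unfolding w by auto
  qed
qed

lemma list_excursion:
  assumes "xs \<noteq> []" "hd xs \<in> I" "last xs \<in> I" "\<not> set xs \<subseteq> I"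
  shows "\<exists>as u ms v bs. xs = as @ u # ms @ v # bs \<and> u \<in> I \<and> v \<in> I \<and> ms \<noteq> [] \<and> set ms \<inter> I = {}"
proof -
  have "\<exists>z \<in> set xs. z \<notin> I" using assms(4) by blast
  then obtain ys z zs where xs: "xs = ys @ z # zs" and z: "z \<notin> I" and ys: "\<forall>y \<in> set ys. y \<in> I"
    using split_list_first_prop[of xs "\<lambda>z. z \<notin> I"] by blast
  have "ys \<noteq> []" using assms(2) xs z by auto
  have "zs \<noteq> []" using assms(3) xs z by auto
  then have "\<exists>v \<in> set zs. v \<in> I" using assms(3) xs last_in_set[of zs] by auto
  then obtain ms v bs where zs: "zs = ms @ v # bs" and v: "v \<in> I" and ms: "\<forall>m \<in> set ms. m \<notin> I"
    using split_list_first_prop[of zs "\<lambda>v. v \<in> I"] by blast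
  show ?thesis
  proof (intro exI conjI)
    show "xs = butlast ys @ last ys # (z # ms) @ v # bs"
      using xs zs \<open>ys \<noteq> []\<close> by simp
    show "last ys \<in> I" using ys \<open>ys \<noteq> []\<close> by simp
  qed (use v ms z in auto)
qed

lemma simple_cycle_close_walk:
  assumes s: "successively E (u # ms @ [v])" "non_backtracking (u # ms @ [v])"
    and ms: "ms \<noteq> []" "distinct ms" "u \<notin> set ms" "set ms \<inter> set q = {}"
    and q: "successively E q" "distinct q" "q \<noteq> []" "hd q = v" "last q = u"
  shows "simple_cycle E (u # ms @ butlast q)"
proof -
  let ?c = "u # ms @ butlast q"
  have q_split: "q = butlast q @ [u]" "q = v # tl q"
    using q(3-5) append_butlast_last_id[of q] hd_Cons_tl[of q] by simp_all
  have closed: "?c @ [hd ?c] = u # ms @ q"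
    by (subst (2) q_split(1)) simp
  have "successively E ((u # ms) @ v # tl q)"
    by (rule successively_append_Cons) (use s(1) q(1) in \<open>simp_all add: q_split(2)[symmetric]\<close>)
  then have "successively E (u # ms @ q)" by (simp add: q_split(2)[symmetric])
  moreover have "distinct ?c"
  proof -
    have "distinct (butlast q @ [u])" using q(2) by (simp only: q_split(1)[symmetric])
    moreover have "set (butlast q) \<subseteq> set q" by (auto dest: in_set_butlastD)
    ultimately show ?thesis using ms(2-4) by auto
  qed
  moreover have "3 \<le> length ?c"
  proof (rule ccontr)
    assume "\<not> 3 \<le> length ?c"
    then have "length ms + length (butlast q) \<le> 1" by (simp del: length_butlast)
    moreover have "0 < length ms" using ms(1) by simp
    ultimately have "length ms = 1" "length (butlast q) = 0" by linarith+
    then obtain m where "ms = [m]" "butlast q = []"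
      by (auto simp del: length_butlast simp: length_Suc_conv)
    from q_split(1) have "q = [u]" unfolding \<open>butlast q = []\<close> by simp
    then have "v = u" using q(4) by simp
    then show False using s(2) \<open>ms = [m]\<close> by simp
  qed
  ultimately show ?thesis unfolding simple_cycle_def closed by simp
qed

lemma excursion_simple_cycle:
  assumes g: "sgraph V E"
    and s: "successively E (u # ms @ [v])" "non_backtracking (u # ms @ [v])"
    and ms: "ms \<noteq> []" "set ms \<inter> I = {}" and u: "u \<in> I"
    and q: "successively E q" "distinct q" "q \<noteq> []" "hd q = v" "last q = u" "set q \<subseteq> I"
  shows "\<exists>c. simple_cycle E c \<and> \<not> set c \<subseteq> I"
proof (cases "distinct ms")
  case False
  have "successively E ms" "non_backtracking ms"
    using s successively_append_iff[of E "u # ms" "[v]"] non_backtracking_appendD[of "u # ms" "[v]"]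
      non_backtracking_appendD[of "[u]" ms]
    by (auto simp: successively_Cons)
  then obtain c where "simple_cycle E c" "set c \<subseteq> set ms"
    using non_backtracking_not_distinct_simple_cycle[OF g _ _ False] by blast
  moreover obtain z where "z \<in> set c"
    using \<open>simple_cycle E c\<close> unfolding simple_cycle_def by fastforce
  ultimately show ?thesis using ms(2) by blast
next
  case True
  have "u \<notin> set ms" "set ms \<inter> set q = {}" using ms(2) u q(6) by auto
  then have "simple_cycle E (u # ms @ butlast q)"
    using simple_cycle_close_walk[OF s ms(1) True _ _ q(1-5)] by blast
  moreover have "hd ms \<in> set (u # ms @ butlast q)" "hd ms \<notin> I"
    using hd_in_set[OF ms(1)] ms(2) by auto
  ultimately show ?thesis by blast
qed

lemma pi1_induced_eq_if_pre_cycle_core: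
  assumes g: "sgraph V E" and core: "pre_cycle_core V E I" and x: "x \<in> I" and y: "y \<in> I"
  shows "pi1 I (induced E I) x y = pi1 V E x y"
proof -
  have IV: "I \<subseteq> V" and conn: "connected_graph I (induced E I)"
    and cycles: "\<And>c. is_cycle V E c \<Longrightarrow> set c \<subseteq> I"
    using core unfolding pre_cycle_core_def by auto
  have "set w \<subseteq> I" if w: "w \<in> pi1 V E x y" for w
  proof (rule ccontr)
    assume "\<not> set w \<subseteq> I"
    moreover have "w \<noteq> []" "successively E w" "non_backtracking w" "hd w = x" "last w = y"
      using w unfolding pi1_def walk_iff_successively by auto
    ultimately obtain as u ms v bs where "w = as @ u # ms @ v # bs"
      and uv: "u \<in> I" "v \<in> I" and ms: "ms \<noteq> []" "set ms \<inter> I = {}"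
      using list_excursion[of w I] x y by blast
    then have w_split: "w = as @ (u # ms @ [v]) @ bs" by simp
    have s: "successively E (u # ms @ [v])" "non_backtracking (u # ms @ [v])"
      using \<open>successively E w\<close> \<open>non_backtracking w\<close> non_backtracking_appendD
      unfolding w_split by (auto simp only: successively_append_iff)
    obtain q where "walk I (induced E I) q" "distinct q" "hd q = v" "last q = u"
      using connected_graph_distinct_walk[OF conn uv(2,1)] by blast
    then have q: "successively E q" "distinct q" "q \<noteq> []" "hd q = v" "last q = u" "set q \<subseteq> I"
      using walk_induced_iff[OF IV] unfolding walk_iff_successively by auto
    obtain c z where "simple_cycle E c" "z \<in> set c" "z \<notin> I"
      using excursion_simple_cycle[OF g s ms uv(1) q] by blast
    then obtain c' where "is_cycle V E c'" "z \<in> set c'"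
      using simple_cycle_induced_cycle_through[OF g] by blast
    then show False using cycles \<open>z \<notin> I\<close> by blast
  qed
  then show ?thesis using pi1_induced[OF IV] by auto
qed

lemma lollipop_walk:
  assumes g: "sgraph V E" and stick: "successively E (ps @ [z])" "distinct (ps @ [z])"
    and loop: "simple_cycle E (z # cs)" and disj: "set ps \<inter> set cs = {}"
  shows "successively E (ps @ z # cs @ z # rev ps)" and "non_backtracking (ps @ z # cs @ z # rev ps)"
proof -
  have retrace: "successively E (z # rev ps)" "non_backtracking (z # rev ps)"
    using sgraph_successively_rev[OF g stick(1)] distinct_imp_non_backtracking[of "rev (ps @ [z])"]
      stick(2) by simp_all
  have around: "successively E ((z # cs) @ [z])" "non_backtracking ((z # cs) @ [z])"
    using loop simple_cycle_closed_non_backtracking[OF loop] unfolding simple_cycle_def by simp_all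
  have "cs \<noteq> []" using loop unfolding simple_cycle_def by auto
  then have "last (z # cs) \<in> set cs" "hd (cs @ z # rev ps) \<in> set cs" by auto
  moreover have "last ps \<notin> set cs" if "ps \<noteq> []" using disj last_in_set[OF that] by blast
  ultimately have turns: "last (z # cs) \<noteq> hd (rev ps)" "last ps \<noteq> hd (cs @ z # rev ps)"
    if "ps \<noteq> []"
    using that by (auto simp: hd_rev)
  have "successively E ((z # cs) @ z # rev ps)" "non_backtracking ((z # cs) @ z # rev ps)"
    using successively_append_Cons[OF around(1) retrace(1)] around(2) retrace(2) turns(1)
    unfolding non_backtracking_append_Cons[of "z # cs" z "rev ps"] by auto
  then show "successively E (ps @ z # cs @ z # rev ps)" "non_backtracking (ps @ z # cs @ z # rev ps)"
    using stick(1) distinct_imp_non_backtracking[OF stick(2)] turns(2)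
    unfolding non_backtracking_append_Cons[of ps z "cs @ z # rev ps"]
    by (auto intro: successively_append_Cons)
qed

lemma simple_cycle_subset_component_if_pi1_eq:
  assumes g: "sgraph V E" and conn: "connected_graph V E" and IV: "I \<subseteq> V" and x: "x \<in> I"
    and eq: "pi1 I (induced E I) x x = pi1 V E x x" and c: "simple_cycle E c"
  shows "set c \<subseteq> component I (induced E I) x"
proof -
  have cV: "set c \<subseteq> V" using simple_cycle_subset[OF g c] .
  have "hd c \<in> set c" using c unfolding simple_cycle_def by (auto intro: hd_in_set)
  then obtain p where p: "walk V E p" "distinct p" "hd p = x" "last p = hd c"
    using connected_graph_distinct_walk[OF conn] x IV cV by blast
  then have "\<exists>z \<in> set p. z \<in> set c" using \<open>hd c \<in> set c\<close> last_in_set[of p]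
    unfolding walk_iff_successively by auto
  then obtain ps z rest where p_split: "p = ps @ z # rest" and z: "z \<in> set c"
    and ps: "\<forall>y \<in> set ps. y \<notin> set c"
    using split_list_first_prop[of p "\<lambda>z. z \<in> set c"] by blast
  have stick: "successively E (ps @ [z])" "distinct (ps @ [z])" "set (ps @ [z]) \<subseteq> V"
    using p unfolding p_split walk_iff_successively by (auto simp: successively_append_iff)
  have stick_hd: "hd (ps @ [z]) = x" using p(3) unfolding p_split by (cases ps) auto
  obtain c1 c2 where "c = c1 @ z # c2" using split_list[OF z] by blast
  define cs where "cs = c2 @ c1"
  have loop: "simple_cycle E (z # cs)"
    using simple_cycle_append_swap c \<open>c = c1 @ z # c2\<close> unfolding cs_def by fastforce
  have set_c: "set c = insert z (set cs)" unfolding cs_def \<open>c = c1 @ z # c2\<close> by auto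
  define W where "W = ps @ z # cs @ z # rev ps"
  have "W \<in> pi1 V E x x"
    unfolding pi1_def walk_iff_successively W_def
    using lollipop_walk[OF g stick(1,2) loop] ps set_c stick(3) stick_hd cV
    by (cases ps) (auto simp: last_rev)
  then have "walk I (induced E I) W" using eq unfolding pi1_def by auto
  then have "set W \<subseteq> component I (induced E I) x"
    using walk_subset_component \<open>W \<in> pi1 V E x x\<close> unfolding pi1_def by fastforce
  then show ?thesis using set_c unfolding W_def by auto
qed

theorem lemma2p5:
  assumes "sgraph V E" and "connected_graph V E" and "I \<subseteq> V"
  shows "(pre_cycle_core V E I \<longrightarrow>
            (\<forall>x\<in>I. \<forall>y\<in>I. pi1 I (induced E I) x y = pi1 V E x y))
       \<and> (\<forall>x\<in>I. pi1 I (induced E I) x x = pi1 V E x x \<longrightarrow>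
            (\<forall>c. is_cycle V E c \<longrightarrow> set c \<subseteq> component I (induced E I) x))"
proof (intro conjI impI ballI allI)
  fix x y assume "pre_cycle_core V E I" "x \<in> I" "y \<in> I"
  then show "pi1 I (induced E I) x y = pi1 V E x y"
    by (rule pi1_induced_eq_if_pre_cycle_core[OF assms(1)])
next
  fix x c assume "x \<in> I" "pi1 I (induced E I) x x = pi1 V E x x" "is_cycle V E c"
  then show "set c \<subseteq> component I (induced E I) x"
    using simple_cycle_subset_component_if_pi1_eq[OF assms] is_cycle_imp_simple_cycle by blast
qed

end
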